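(* Let $p>1$ be an integer. Let $A$ be the free abelian group on $a,b,c$, let $B=\langle A,t\mid t^{-1}at=ab,\ t^{-1}bt=bc,\ t^{-1}ct=c\rangle$ (an HNN-extension, torsion-free nilpotent of class 3), let $F=\langle f\rangle$ be infinite cyclic, $K=B\times F$, and let $G_p=\langle K,s\rangle\le\overline{K}$ where $s$ is the unique $p$-th root of $bf$ in the rational closure $\overline{K}$. Then $G_p$ is directly indecomposable (it has no nontrivial direct decomposition); in particular it has no nontrivial abelian direct factor.
   Context: The rational closure $\overline{K}$ of a finitely generated torsion-free nilpotent group $K$ is the torsion-free nilpotent group containing $K$ in which every element has a unique $n$-th root for each $n\ge1$ and every element has a positive power in $K$. *)

theory Defs
  imports "HOL-Algebra.Algebra"
begin

text \<open>B = A \<rtimes> <t> with A = Z^3 (basis a=e1, b=e2, c=e3) and conjugation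
  x \<mapsto> t^-1 x t acting on A by phi, phi(e1)=e1+e2, phi(e2)=e2+e3, phi(e3)=e3.
  phi = I + N with N nilpotent, so phi^y = I + y N + (y choose 2) N^2 makes sense
  for all rational y.  The rational closure of B is Q^3 \<rtimes> Q, where an element
  (v, x) stands for v t^x, with product (v,x)(w,y) = (v + phi^(-x) w, x + y).
  The rational closure of K = B x F is (Q^3 \<rtimes> Q) x Q.\<close>

type_synonym kelem = "(rat \<times> rat \<times> rat) \<times> rat \<times> rat"

definition phi_pow :: "rat \<Rightarrow> rat \<times> rat \<times> rat \<Rightarrow> rat \<times> rat \<times> rat" where
  "phi_pow y w = (case w of (w1, w2, w3) \<Rightarrow>
      (w1, w2 + y * w1, w3 + y * w2 + (y * (y - 1) / 2) * w1))"

definition vadd :: "rat \<times> rat \<times> rat \<Rightarrow> rat \<times> rat \<times> rat \<Rightarrow> rat \<times> rat \<times> rat" where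
  "vadd v w = (case v of (v1, v2, v3) \<Rightarrow> case w of (w1, w2, w3) \<Rightarrow>
      (v1 + w1, v2 + w2, v3 + w3))"

definition kbar_mult :: "kelem \<Rightarrow> kelem \<Rightarrow> kelem" where
  "kbar_mult g h = (case g of (v, x, z) \<Rightarrow> case h of (w, y, u) \<Rightarrow>
      (vadd v (phi_pow (- x) w), x + y, z + u))"

definition Kbar :: "kelem monoid" where
  "Kbar = \<lparr> carrier = UNIV, monoid.mult = kbar_mult, one = ((0, 0, 0), 0, 0) \<rparr>"

definition gen_a :: kelem where "gen_a = ((1, 0, 0), 0, 0)"
definition gen_b :: kelem where "gen_b = ((0, 1, 0), 0, 0)"
definition gen_c :: kelem where "gen_c = ((0, 0, 1), 0, 0)"
definition gen_t :: kelem where "gen_t = ((0, 0, 0), 1, 0)"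
definition gen_f :: kelem where "gen_f = ((0, 0, 0), 0, 1)"

definition K_grp :: "kelem monoid" where
  "K_grp = subgroup_generated Kbar {gen_a, gen_b, gen_c, gen_t, gen_f}"

definition root_s :: "nat \<Rightarrow> kelem" where
  "root_s p = (THE x. x \<in> carrier Kbar \<and> x [^]\<^bsub>Kbar\<^esub> p = gen_b \<otimes>\<^bsub>Kbar\<^esub> gen_f)"

definition G_p :: "nat \<Rightarrow> kelem monoid" where
  "G_p p = subgroup_generated Kbar
      {gen_a, gen_b, gen_c, gen_t, gen_f, root_s p}"

definition internal_direct_product :: "('a, 'b) monoid_scheme \<Rightarrow> 'a set \<Rightarrow> 'a set \<Rightarrow> bool" where
  "internal_direct_product G H L \<longleftrightarrow>
     H \<lhd> G \<and> L \<lhd> G \<and> H \<inter> L = {\<one>\<^bsub>G\<^esub>} \<and> H <#>\<^bsub>G\<^esub> L = carrier G"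

definition directly_indecomposable :: "('a, 'b) monoid_scheme \<Rightarrow> bool" where
  "directly_indecomposable G \<longleftrightarrow>
     (\<forall>H L. internal_direct_product G H L \<longrightarrow> H = {\<one>\<^bsub>G\<^esub>} \<or> L = {\<one>\<^bsub>G\<^esub>})"

end

(* An element of Kbar is written v t^x f^z; call x its t-exponent. An element of nonzero
   t-exponent has commutative centraliser. So if G_p = H x L and both factors contained
   elements of nonzero t-exponent, both factors would be commutative and so would G_p, but a
   and t do not commute. Hence, say, every element of L has t-exponent 0. Then L centralises
   the H-component of t, which forces L into the centre c^Q f^Q of Kbar, so all commutators
   of G_p lie in H: b = [a,t] and c^(1/p) = [s,t]. Splitting s = h l then yields f^N in H with
   N = 1 (mod p), so N is nonzero as p > 1. The N-th power of every element of L therefore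
   lies in the intersection of H and L, i.e. it is 1; as Kbar is torsion-free, L = 1. *)

theory Submission
  imports Defs
begin

lemma kbar_mult_eq:
  "kbar_mult ((v1, v2, v3), x, z) ((w1, w2, w3), y, u) =
     ((v1 + w1, v2 + w2 - x * w1, v3 + w3 - x * w2 + x * (x + 1) / 2 * w1), x + y, z + u)"
  by (simp add: kbar_mult_def vadd_def phi_pow_def algebra_simps)

lemma Kbar_simps [simp]:
  "carrier Kbar = UNIV"
  "monoid.mult Kbar = kbar_mult"
  "\<one>\<^bsub>Kbar\<^esub> = ((0, 0, 0), 0, 0)"
  by (simp_all add: Kbar_def)

lemma kelem_cases: obtains v1 v2 v3 x z where "g = ((v1, v2, v3), x, z)"
  by (metis prod.exhaust)

lemma kbar_mult_assoc: "kbar_mult (kbar_mult g h) k = kbar_mult g (kbar_mult h k)"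
  by (cases g rule: kelem_cases; cases h rule: kelem_cases; cases k rule: kelem_cases)
    (simp add: kbar_mult_eq field_simps)

lemma group_Kbar: "group Kbar"
proof (rule groupI)
  fix g :: kelem
  obtain v1 v2 v3 x z where g: "g = ((v1, v2, v3), x, z)" by (rule kelem_cases)
  let ?h = "((- v1, - v2 - x * v1, - v3 - x * v2 - x * (x - 1) / 2 * v1), - x, - z)"
  have "kbar_mult ?h g = ((0, 0, 0), 0, 0)"
    unfolding g kbar_mult_eq by (simp add: field_simps)
  then show "\<exists>h\<in>carrier Kbar. h \<otimes>\<^bsub>Kbar\<^esub> g = \<one>\<^bsub>Kbar\<^esub>"
    by (metis Kbar_simps UNIV_I)
qed (auto simp: kbar_mult_assoc kbar_mult_eq split: prod.split)

interpretation Kbar: group Kbar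
  by (rule group_Kbar)

lemma Kbar_inv_eq:
  "inv\<^bsub>Kbar\<^esub> ((v1, v2, v3), x, z) =
     ((- v1, - v2 - x * v1, - v3 - x * v2 - x * (x - 1) / 2 * v1), - x, - z)"
  by (rule Kbar.inv_equality) (simp_all add: kbar_mult_eq field_simps)

lemma Kbar_t_exp_mult: "fst (snd (kbar_mult g h)) = fst (snd g) + fst (snd h)"
  by (cases g rule: kelem_cases; cases h rule: kelem_cases) (simp add: kbar_mult_eq)

lemma Kbar_t_exp_pow: "fst (snd (g [^]\<^bsub>Kbar\<^esub> n)) = of_nat n * fst (snd g)"
  by (induction n) (simp_all add: Kbar_t_exp_mult algebra_simps)

lemma Kbar_pow_t_exp_0:
  "((v1, v2, v3), 0, z) [^]\<^bsub>Kbar\<^esub> n =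
     ((of_nat n * v1, of_nat n * v2, of_nat n * v3), 0, of_nat n * z)"
  by (induction n) (simp_all add: kbar_mult_eq algebra_simps)

lemma Kbar_int_pow_t_exp_0:
  "((v1, v2, v3), 0, z) [^]\<^bsub>Kbar\<^esub> (k :: int) =
     ((of_int k * v1, of_int k * v2, of_int k * v3), 0, of_int k * z)"
  by (simp add: int_pow_def2 Kbar_pow_t_exp_0 Kbar_inv_eq)

lemma root_s_eq:
  assumes "p > 0"
  shows "root_s p = ((0, 1 / of_nat p, 0), 0, 1 / of_nat p)"
  unfolding root_s_def
proof (rule the_equality)
  show "((0, 1 / of_nat p, 0), 0, 1 / of_nat p) \<in> carrier Kbar \<and>
      ((0, 1 / of_nat p, 0), 0, 1 / of_nat p) [^]\<^bsub>Kbar\<^esub> p = gen_b \<otimes>\<^bsub>Kbar\<^esub> gen_f"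
    using assms by (simp add: Kbar_pow_t_exp_0 gen_b_def gen_f_def kbar_mult_eq)
next
  fix g assume g: "g \<in> carrier Kbar \<and> g [^]\<^bsub>Kbar\<^esub> p = gen_b \<otimes>\<^bsub>Kbar\<^esub> gen_f"
  obtain v1 v2 v3 x z where g_eq: "g = ((v1, v2, v3), x, z)" by (rule kelem_cases)
  have "of_nat p * x = 0"
    using g Kbar_t_exp_pow[of g p] by (simp add: g_eq gen_b_def gen_f_def kbar_mult_eq)
  with assms have x: "x = 0" by simp
  have "((of_nat p * v1, of_nat p * v2, of_nat p * v3), 0, of_nat p * z) = ((0, 1, 0), 0, 1)"
    using g by (simp add: g_eq x Kbar_pow_t_exp_0 gen_b_def gen_f_def kbar_mult_eq)
  then show "g = ((0, 1 / of_nat p, 0), 0, 1 / of_nat p)"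
    using assms by (simp add: g_eq x field_simps)
qed

lemma G_p_simps [simp]:
  "monoid.mult (G_p p) = kbar_mult"
  "\<one>\<^bsub>G_p p\<^esub> = ((0, 0, 0), 0, 0)"
  by (simp_all add: G_p_def)

lemma generators_in_G_p: "{gen_a, gen_b, gen_c, gen_t, gen_f, root_s p} \<subseteq> carrier (G_p p)"
  unfolding G_p_def carrier_subgroup_generated by (auto intro: generate.incl)

(* The coordinate conditions satisfied by a, b, c, t, f and s = b^(1/p) f^(1/p). *)
definition coord_lattice :: "nat \<Rightarrow> kelem set" where
  "coord_lattice p = {((v1, v2, v3), x, z) | v1 v2 v3 x z.
     x \<in> \<int> \<and> v1 \<in> \<int> \<and> v2 - z \<in> \<int> \<and> of_nat p * z \<in> \<int> \<and> of_nat p * v3 \<in> \<int>}"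

lemma mem_coord_lattice [simp]:
  "((v1, v2, v3), x, z) \<in> coord_lattice p \<longleftrightarrow>
     x \<in> \<int> \<and> v1 \<in> \<int> \<and> v2 - z \<in> \<int> \<and> of_nat p * z \<in> \<int> \<and> of_nat p * v3 \<in> \<int>"
  by (simp add: coord_lattice_def)

lemma Ints_triangular:
  fixes x :: "'a :: field_char_0"
  assumes "x \<in> \<int>"
  shows "x * (x + 1) / 2 \<in> \<int>"
proof -
  obtain i where "x = of_int i" using assms by (rule Ints_cases)
  moreover have "2 dvd i * (i + 1)" by simp
  ultimately show ?thesis using of_int_divide_in_Ints[of 2 "i * (i + 1)"] by simp
qed

lemma subgroup_coord_lattice: "subgroup (coord_lattice p) Kbar"
proof (rule Kbar.subgroupI)
  have "((0, 0, 0), 0, 0) \<in> coord_lattice p" by simp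
  then show "coord_lattice p \<noteq> {}" by blast
next
  fix g assume "g \<in> coord_lattice p"
  then obtain v1 v2 v3 x z where g: "g = ((v1, v2, v3), x, z)" and
    ints: "x \<in> \<int>" "v1 \<in> \<int>" "v2 - z \<in> \<int>" "of_nat p * z \<in> \<int>" "of_nat p * v3 \<in> \<int>"
    by (cases g rule: kelem_cases) auto
  have "of_nat p * v2 = of_nat p * (v2 - z) + of_nat p * z" by (simp add: algebra_simps)
  then have pv2: "of_nat p * v2 \<in> \<int>" using ints by simp
  have tri: "(x - 1) * ((x - 1) + 1) / 2 \<in> \<int>" using ints by (intro Ints_triangular) simp
  have "- v2 - x * v1 - - z = - (v2 - z) - x * v1" by simp
  then have c2: "- v2 - x * v1 - - z \<in> \<int>"
    using ints by (metis Ints_diff Ints_minus Ints_mult)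
  have "of_nat p * (- v3 - x * v2 - x * (x - 1) / 2 * v1) =
      - (of_nat p * v3) - x * (of_nat p * v2) - of_nat p * ((x - 1) * ((x - 1) + 1) / 2) * v1"
    by (simp add: algebra_simps)
  then have c3: "of_nat p * (- v3 - x * v2 - x * (x - 1) / 2 * v1) \<in> \<int>"
    using ints pv2 tri by (metis Ints_diff Ints_minus Ints_mult Ints_of_nat)
  show "inv\<^bsub>Kbar\<^esub> g \<in> coord_lattice p"
    unfolding g Kbar_inv_eq mem_coord_lattice using ints c2 c3 by simp
next
  fix g h assume "g \<in> coord_lattice p" "h \<in> coord_lattice p"
  then obtain v1 v2 v3 x z w1 w2 w3 y u where g: "g = ((v1, v2, v3), x, z)"
    and h: "h = ((w1, w2, w3), y, u)" and
    ints: "x \<in> \<int>" "v1 \<in> \<int>" "v2 - z \<in> \<int>" "of_nat p * z \<in> \<int>" "of_nat p * v3 \<in> \<int>"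
      "y \<in> \<int>" "w1 \<in> \<int>" "w2 - u \<in> \<int>" "of_nat p * u \<in> \<int>" "of_nat p * w3 \<in> \<int>"
    by (cases g rule: kelem_cases; cases h rule: kelem_cases) auto
  have "of_nat p * w2 = of_nat p * (w2 - u) + of_nat p * u" by (simp add: algebra_simps)
  then have pw2: "of_nat p * w2 \<in> \<int>" using ints by simp
  have tri: "x * (x + 1) / 2 \<in> \<int>" using ints(1) by (rule Ints_triangular)
  have "v2 + w2 - x * w1 - (z + u) = (v2 - z) + (w2 - u) - x * w1" by simp
  then have c2: "v2 + w2 - x * w1 - (z + u) \<in> \<int>"
    using ints by (metis Ints_add Ints_diff Ints_mult)
  have "of_nat p * (v3 + w3 - x * w2 + x * (x + 1) / 2 * w1) =
      of_nat p * v3 + of_nat p * w3 - x * (of_nat p * w2) + of_nat p * (x * (x + 1) / 2) * w1"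
    by (simp add: algebra_simps)
  then have c3: "of_nat p * (v3 + w3 - x * w2 + x * (x + 1) / 2 * w1) \<in> \<int>"
    using ints pw2 tri by (metis Ints_add Ints_diff Ints_mult Ints_of_nat)
  have c4: "of_nat p * (z + u) \<in> \<int>"
    using ints by (simp add: distrib_left)
  show "g \<otimes>\<^bsub>Kbar\<^esub> h \<in> coord_lattice p"
    unfolding g h Kbar_simps kbar_mult_eq mem_coord_lattice using ints c2 c3 c4 by simp
qed simp

lemma carrier_G_p_subset_coord_lattice:
  assumes "p > 0"
  shows "carrier (G_p p) \<subseteq> coord_lattice p"
  unfolding G_p_def carrier_subgroup_generated
proof (rule Kbar.generate_subgroup_incl[OF _ subgroup_coord_lattice])
  show "carrier Kbar \<inter> {gen_a, gen_b, gen_c, gen_t, gen_f, root_s p} \<subseteq> coord_lattice p"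
    using assms by (simp add: root_s_eq gen_a_def gen_b_def gen_c_def gen_t_def gen_f_def)
qed

lemma group_G_p: "group (G_p p)"
  by (simp add: G_p_def)

lemma central_in_G_p_Ints:
  assumes "p > 0" "((0, 0, w), 0, u) \<in> carrier (G_p p)"
  shows "of_nat p * w \<in> \<int>" "u \<in> \<int>"
  using carrier_G_p_subset_coord_lattice[OF assms(1)] assms(2) by auto

definition commutator :: "('a, 'b) monoid_scheme \<Rightarrow> 'a \<Rightarrow> 'a \<Rightarrow> 'a" where
  "commutator G g h = inv\<^bsub>G\<^esub> g \<otimes>\<^bsub>G\<^esub> inv\<^bsub>G\<^esub> h \<otimes>\<^bsub>G\<^esub> g \<otimes>\<^bsub>G\<^esub> h"

lemma (in group) commutator_in_subgroup:
  assumes "subgroup H G" "g \<in> H" "h \<in> H"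
  shows "commutator G g h \<in> H"
  using assms by (simp add: commutator_def subgroup.m_closed subgroup.m_inv_closed)

lemma (in group) commutator_mult_central:
  assumes g: "g \<in> carrier G" and h: "h \<in> carrier G"
    and z: "z \<in> carrier G" "\<And>x. x \<in> carrier G \<Longrightarrow> z \<otimes> x = x \<otimes> z"
    and z': "z' \<in> carrier G" "\<And>x. x \<in> carrier G \<Longrightarrow> z' \<otimes> x = x \<otimes> z'"
  shows "commutator G (g \<otimes> z) (h \<otimes> z') = commutator G g h"
proof -
  have conj_central: "inv c \<otimes> (w \<otimes> c) = w"
    if "c \<in> carrier G" "w \<in> carrier G" "c \<otimes> w = w \<otimes> c" for c w
    using that by (metis inv_solve_left m_closed)
  define w where "w = inv g \<otimes> inv z' \<otimes> inv h \<otimes> g"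
  define u where "u = inv h \<otimes> g \<otimes> h"
  have w: "w \<in> carrier G" and u: "u \<in> carrier G"
    using g h z'(1) by (simp_all add: w_def u_def)
  have "commutator G (g \<otimes> z) (h \<otimes> z') = inv z \<otimes> (w \<otimes> z) \<otimes> (h \<otimes> z')"
    using g h z(1) z'(1) by (simp add: w_def commutator_def inv_mult_group m_assoc)
  also have "\<dots> = w \<otimes> (h \<otimes> z')"
    by (simp only: conj_central[OF z(1) w z(2)[OF w]])
  also have "\<dots> = inv g \<otimes> (inv z' \<otimes> (u \<otimes> z'))"
    using g h z'(1) by (simp add: w_def u_def m_assoc)
  also have "\<dots> = inv g \<otimes> u"
    by (simp only: conj_central[OF z'(1) u z'(2)[OF u]])
  also have "\<dots> = commutator G g h"
    using g h by (simp add: u_def commutator_def m_assoc)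
  finally show ?thesis .
qed

lemma Kbar_central: "kbar_mult ((0, 0, w), 0, u) g = kbar_mult g ((0, 0, w), 0, u)"
  by (cases g rule: kelem_cases) (simp add: kbar_mult_eq)

lemma Kbar_central_if_commute_t_exp_nonzero:
  assumes "fst (snd h) \<noteq> 0" "fst (snd g) = 0" "kbar_mult g h = kbar_mult h g"
  obtains w u where "g = ((0, 0, w), 0, u)"
proof -
  obtain v1 v2 v3 x z where g: "g = ((v1, v2, v3), x, z)" by (rule kelem_cases)
  obtain w1 w2 w3 y u where h: "h = ((w1, w2, w3), y, u)" by (rule kelem_cases)
  have v1: "v1 = 0"
    using assms by (simp add: g h kbar_mult_eq)
  then have "v2 = 0"
    using assms by (simp add: g h kbar_mult_eq)
  with v1 that show ?thesis using assms(2) by (simp add: g)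
qed

lemma Kbar_centralizer_commutative:
  assumes "fst (snd g) \<noteq> 0"
    and "kbar_mult h g = kbar_mult g h" "kbar_mult h' g = kbar_mult g h'"
  shows "kbar_mult h h' = kbar_mult h' h"
proof -
  obtain a1 a2 a3 x z where g: "g = ((a1, a2, a3), x, z)" by (rule kelem_cases)
  obtain b1 b2 b3 y u where h: "h = ((b1, b2, b3), y, u)" by (rule kelem_cases)
  obtain d1 d2 d3 y' u' where h': "h' = ((d1, d2, d3), y', u')" by (rule kelem_cases)
  have x: "x \<noteq> 0" using assms(1) by (simp add: g)
  \<comment> \<open>Commuting with g fixes the a- and b-coordinates of an element in terms of its t-exponent.\<close>
  have b: "b1 = y * a1 / x" "b2 = (y * a2 - y * (y + 1) / 2 * a1 + x * (x + 1) / 2 * b1) / x"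
    using assms(2) x by (simp_all add: g h kbar_mult_eq field_simps)
  have d: "d1 = y' * a1 / x" "d2 = (y' * a2 - y' * (y' + 1) / 2 * a1 + x * (x + 1) / 2 * d1) / x"
    using assms(3) x by (simp_all add: g h' kbar_mult_eq field_simps)
  have "y * d1 = y' * b1" using b d by simp
  moreover have "- y * d2 + y * (y + 1) / 2 * d1 = - y' * b2 + y' * (y' + 1) / 2 * b1"
    unfolding b(2) d(2) unfolding b(1) d(1) using x by (simp add: field_simps)
  ultimately show ?thesis by (simp add: h h' kbar_mult_eq field_simps)
qed

lemma Kbar_a_t_not_commute: "kbar_mult gen_a gen_t \<noteq> kbar_mult gen_t gen_a"
  by (simp add: gen_a_def gen_t_def kbar_mult_eq)

lemma Kbar_commutator_a_t: "commutator Kbar gen_a gen_t = gen_b"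
  by (simp add: commutator_def gen_a_def gen_t_def gen_b_def kbar_mult_eq Kbar_inv_eq)

lemma Kbar_commutator_root_s_t:
  assumes "p > 0"
  shows "commutator Kbar (root_s p) gen_t = ((0, 0, 1 / of_nat p), 0, 0)"
  using assms by (simp add: commutator_def root_s_eq gen_t_def kbar_mult_eq Kbar_inv_eq)

locale G_p_decomposition =
  fixes p :: nat and H L :: "kelem set"
  assumes p_gt_1: "p > 1"
    and direct: "internal_direct_product (G_p p) H L"
begin

lemma subgroup_factors: "subgroup H Kbar" "subgroup L Kbar"
  using direct Kbar.subgroup_subgroup_generated_iff
  unfolding internal_direct_product_def G_p_def by (blast dest: normal_imp_subgroup)+

lemma factors_subset: "H \<subseteq> carrier (G_p p)" "L \<subseteq> carrier (G_p p)"
  using direct unfolding internal_direct_product_def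
  by (blast dest: normal_imp_subgroup subgroup.subset)+

lemma factors_Int: "H \<inter> L = {((0, 0, 0), 0, 0)}"
  using direct by (simp add: internal_direct_product_def)

lemma factors_commute: "h \<in> H \<Longrightarrow> l \<in> L \<Longrightarrow> kbar_mult h l = kbar_mult l h"
  using group.normal_imp_commuting[OF group_G_p, of H p L h l] direct
  by (simp add: internal_direct_product_def)

lemma decompose:
  assumes "g \<in> carrier (G_p p)"
  obtains h l where "h \<in> H" "l \<in> L" "g = kbar_mult h l"
proof -
  have "g \<in> H <#>\<^bsub>G_p p\<^esub> L"
    using direct assms by (simp add: internal_direct_product_def)
  then show ?thesis using that unfolding set_mult_def G_p_simps by blast
qed

lemma swap: "G_p_decomposition p L H"
proof
  have "L <#>\<^bsub>G_p p\<^esub> H = H <#>\<^bsub>G_p p\<^esub> L"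
    using direct group.commut_normal[OF group_G_p]
    unfolding internal_direct_product_def by (blast dest: normal_imp_subgroup)
  then show "internal_direct_product (G_p p) L H"
    using direct unfolding internal_direct_product_def by blast
qed (rule p_gt_1)

lemma not_both_factors_t_exp_nonzero:
  assumes h: "h \<in> H" "fst (snd h) \<noteq> 0" and l: "l \<in> L" "fst (snd l) \<noteq> 0"
  shows False
proof -
  have H_comm: "kbar_mult h1 h2 = kbar_mult h2 h1" if "h1 \<in> H" "h2 \<in> H" for h1 h2
    using Kbar_centralizer_commutative[OF l(2)] factors_commute l(1) that by metis
  have L_comm: "kbar_mult l1 l2 = kbar_mult l2 l1" if "l1 \<in> L" "l2 \<in> L" for l1 l2
    using Kbar_centralizer_commutative[OF h(2)] factors_commute h(1) that by metis
  obtain ha la where ha: "ha \<in> H" and la: "la \<in> L" and a: "gen_a = kbar_mult ha la"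
    using generators_in_G_p by (blast elim: decompose)
  obtain ht lt where ht: "ht \<in> H" and lt: "lt \<in> L" and t: "gen_t = kbar_mult ht lt"
    using generators_in_G_p by (blast elim: decompose)
  have "kbar_mult gen_a gen_t = kbar_mult ha (kbar_mult (kbar_mult la ht) lt)"
    by (simp add: a t kbar_mult_assoc)
  also have "\<dots> = kbar_mult ha (kbar_mult (kbar_mult ht la) lt)"
    by (simp only: factors_commute[OF ht la])
  also have "\<dots> = kbar_mult (kbar_mult ha ht) (kbar_mult la lt)"
    by (simp add: kbar_mult_assoc)
  also have "\<dots> = kbar_mult (kbar_mult ht ha) (kbar_mult lt la)"
    by (simp only: H_comm[OF ha ht] L_comm[OF la lt])
  also have "\<dots> = kbar_mult ht (kbar_mult (kbar_mult ha lt) la)"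
    by (simp add: kbar_mult_assoc)
  also have "\<dots> = kbar_mult ht (kbar_mult (kbar_mult lt ha) la)"
    by (simp only: factors_commute[OF ha lt])
  also have "\<dots> = kbar_mult gen_t gen_a"
    by (simp add: a t kbar_mult_assoc)
  finally show False using Kbar_a_t_not_commute by simp
qed

context
  assumes L_t_exp_0: "\<And>l. l \<in> L \<Longrightarrow> fst (snd l) = 0"
begin

lemma L_central:
  assumes "l \<in> L"
  obtains w u where "l = ((0, 0, w), 0, u)"
proof -
  obtain ht lt where ht: "ht \<in> H" and lt: "lt \<in> L" and t: "gen_t = kbar_mult ht lt"
    using generators_in_G_p by (blast elim: decompose)
  have "fst (snd ht) = 1"
    using Kbar_t_exp_mult[of ht lt] L_t_exp_0[OF lt] by (simp add: t [symmetric] gen_t_def)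
  then show ?thesis
    using Kbar_central_if_commute_t_exp_nonzero L_t_exp_0[OF assms] factors_commute[OF ht assms] that
    by (metis zero_neq_one)
qed

lemma commutator_in_H:
  assumes "g \<in> carrier (G_p p)" "g' \<in> carrier (G_p p)"
  shows "commutator Kbar g g' \<in> H"
proof -
  obtain h l where h: "h \<in> H" and l: "l \<in> L" and g: "g = kbar_mult h l"
    using assms(1) by (rule decompose)
  obtain h' l' where h': "h' \<in> H" and l': "l' \<in> L" and g': "g' = kbar_mult h' l'"
    using assms(2) by (rule decompose)
  have "commutator Kbar g g' = commutator Kbar h h'"
    using L_central[OF l] L_central[OF l'] Kbar.commutator_mult_central[of h h' l l']
    by (metis Kbar_central Kbar_simps(1,2) UNIV_I g g')
  then show ?thesis
    using Kbar.commutator_in_subgroup[OF subgroup_factors(1) h h'] by simp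
qed

lemma gen_b_in_H: "gen_b \<in> H"
  using commutator_in_H[of gen_a gen_t] generators_in_G_p by (simp add: Kbar_commutator_a_t)

lemma c_root_in_H: "((0, 0, 1 / of_nat p), 0, 0) \<in> H"
  using commutator_in_H[of "root_s p" gen_t] generators_in_G_p p_gt_1
  by (simp add: Kbar_commutator_root_s_t)

lemma f_power_in_H:
  obtains N :: int where "N \<noteq> 0" "((0, 0, 0), 0, of_int N) \<in> H"
proof -
  have p: "p > 0" using p_gt_1 by simp
  obtain hs ls where hs: "hs \<in> H" and ls: "ls \<in> L" and s: "root_s p = kbar_mult hs ls"
    using generators_in_G_p by (blast elim: decompose)
  obtain \<alpha> \<beta> where ls_eq: "ls = ((0, 0, \<alpha>), 0, \<beta>)" using ls by (rule L_central)
  have "((0, 0, \<alpha>), 0, \<beta>) \<in> carrier (G_p p)" using ls ls_eq factors_subset by auto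
  then obtain k j where k: "of_nat p * \<alpha> = of_int k" and j: "\<beta> = of_int j"
    using central_in_G_p_Ints[OF p] by (metis Ints_cases)
  have hs_eq: "hs = ((0, 1 / of_nat p, - \<alpha>), 0, 1 / of_nat p - \<beta>)"
    using s by (cases hs rule: kelem_cases) (simp add: ls_eq root_s_eq[OF p] kbar_mult_eq)
  have "((0, 0, 1 / of_nat p), 0, 0) [^]\<^bsub>Kbar\<^esub> k = ((0, 0, \<alpha>), 0, 0)"
    using p k by (simp add: Kbar_int_pow_t_exp_0 field_simps)
  then have "kbar_mult hs ((0, 0, \<alpha>), 0, 0) \<in> H"
    using Kbar.subgroup_int_pow_closed[OF subgroup_factors(1) c_root_in_H, of k] hs
      subgroup.m_closed[OF subgroup_factors(1)] by simp
  then have "((0, 1 / of_nat p, 0), 0, 1 / of_nat p - \<beta>) [^]\<^bsub>Kbar\<^esub> (int p) \<in> H"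
    using Kbar.subgroup_int_pow_closed[OF subgroup_factors(1)] by (simp add: hs_eq kbar_mult_eq)
  moreover have "((0, 1 / of_nat p, 0), 0, 1 / of_nat p - \<beta>) [^]\<^bsub>Kbar\<^esub> (int p) =
      ((0, 1, 0), 0, 1 - of_nat p * \<beta>)"
    using p by (simp add: Kbar_int_pow_t_exp_0 right_diff_distrib)
  ultimately have "((0, 1, 0), 0, 1 - of_nat p * \<beta>) \<in> H" by simp
  then have "kbar_mult (inv\<^bsub>Kbar\<^esub> gen_b) ((0, 1, 0), 0, 1 - of_nat p * \<beta>) \<in> H"
    using subgroup.m_closed[OF subgroup_factors(1)]
      subgroup.m_inv_closed[OF subgroup_factors(1) gen_b_in_H] by simp
  then have "((0, 0, 0), 0, of_int (1 - int p * j)) \<in> H"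
    by (simp add: gen_b_def Kbar_inv_eq kbar_mult_eq j)
  moreover have "1 - int p * j \<noteq> 0" \<comment> \<open>the one place where p > 1 rather than p > 0 matters\<close>
  proof
    assume "1 - int p * j = 0"
    then have "int p dvd 1" by (metis dvd_triv_left eq_iff_diff_eq_0)
    with p_gt_1 show False by simp
  qed
  ultimately show ?thesis using that by blast
qed

lemma L_trivial: "L = {((0, 0, 0), 0, 0)}"
proof -
  have p: "p > 0" using p_gt_1 by simp
  obtain N where N: "N \<noteq> 0" "((0, 0, 0), 0, of_int N) \<in> H" by (rule f_power_in_H)
  have "l = ((0, 0, 0), 0, 0)" if l: "l \<in> L" for l
  proof -
    obtain w u where l_eq: "l = ((0, 0, w), 0, u)" using l by (rule L_central)
    have "((0, 0, w), 0, u) \<in> carrier (G_p p)" using l l_eq factors_subset by auto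
    then obtain m n where m: "of_nat p * w = of_int m" and n: "u = of_int n"
      using central_in_G_p_Ints[OF p] by (metis Ints_cases)
    have "((0, 0, 1 / of_nat p), 0, 0) [^]\<^bsub>Kbar\<^esub> (m * N) \<otimes>\<^bsub>Kbar\<^esub>
        ((0, 0, 0), 0, of_int N) [^]\<^bsub>Kbar\<^esub> n = l [^]\<^bsub>Kbar\<^esub> N"
      using p m by (simp add: l_eq n Kbar_int_pow_t_exp_0 kbar_mult_eq field_simps)
    then have "l [^]\<^bsub>Kbar\<^esub> N \<in> H"
      using subgroup.m_closed[OF subgroup_factors(1)] c_root_in_H N(2)
        Kbar.subgroup_int_pow_closed[OF subgroup_factors(1)] by metis
    moreover have "l [^]\<^bsub>Kbar\<^esub> N \<in> L"
      using Kbar.subgroup_int_pow_closed[OF subgroup_factors(2) l] .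
    ultimately have "l [^]\<^bsub>Kbar\<^esub> N = ((0, 0, 0), 0, 0)" using factors_Int by blast
    then show ?thesis using N(1) by (simp add: l_eq Kbar_int_pow_t_exp_0)
  qed
  moreover have "((0, 0, 0), 0, 0) \<in> L"
    using subgroup.one_closed[OF subgroup_factors(2)] by simp
  ultimately show ?thesis by blast
qed

end

lemma trivial_factor: "H = {((0, 0, 0), 0, 0)} \<or> L = {((0, 0, 0), 0, 0)}"
proof (cases "\<forall>l \<in> L. fst (snd l) = 0")
  case True
  then show ?thesis using L_trivial by blast
next
  case False
  then obtain l where "l \<in> L" "fst (snd l) \<noteq> 0" by blast
  then have "\<forall>h \<in> H. fst (snd h) = 0" using not_both_factors_t_exp_nonzero by blast
  then show ?thesis using G_p_decomposition.L_trivial[OF swap] by blast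
qed

lemma H_eq_carrier_if_L_trivial:
  assumes "L = {((0, 0, 0), 0, 0)}"
  shows "H = carrier (G_p p)"
proof
  show "carrier (G_p p) \<subseteq> H"
    using assms by (auto elim: decompose simp: kbar_mult_eq)
qed (rule factors_subset(1))

end

theorem mainTheorem18:
  fixes p :: nat
  assumes "p > 1"
  shows "directly_indecomposable (G_p p)
         \<and> (\<forall>H L. internal_direct_product (G_p p) H L \<and> comm_group ((G_p p)\<lparr>carrier := H\<rparr>)
               \<longrightarrow> H = {\<one>\<^bsub>G_p p\<^esub>})"
proof -
  have trivial_factor: "H = {\<one>\<^bsub>G_p p\<^esub>} \<or> L = {\<one>\<^bsub>G_p p\<^esub>}"
    if "internal_direct_product (G_p p) H L" for H L
    using G_p_decomposition.trivial_factor[of p H L] assms that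
    by (simp add: G_p_decomposition_def)
  moreover have "H = {\<one>\<^bsub>G_p p\<^esub>}"
    if direct: "internal_direct_product (G_p p) H L"
      and abelian: "comm_group ((G_p p)\<lparr>carrier := H\<rparr>)" for H L
  proof (rule ccontr)
    assume "H \<noteq> {\<one>\<^bsub>G_p p\<^esub>}"
    then have "H = carrier (G_p p)"
      using trivial_factor[OF direct] G_p_decomposition.H_eq_carrier_if_L_trivial[of p H L]
        assms direct by (simp add: G_p_decomposition_def)
    then have "kbar_mult gen_a gen_t = kbar_mult gen_t gen_a"
      using comm_monoid.m_comm[OF comm_group.axioms(1)[OF abelian]] generators_in_G_p by simp
    with Kbar_a_t_not_commute show False ..
  qed
  ultimately show ?thesis
    unfolding directly_indecomposable_def by blast
qed

end
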